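(* Let $d\ge3$, let $C$ be a set of lines on ${\rm F}_d$ and put $C^s=C\cap\mathcal{L}^s$ for $s=0,1,2$. Then: (a) $C^0$ consists of pairwise disjoint lines if and only if $C^0=\{L^0_{a_1,b_1},\dots,L^0_{a_m,b_m}\}$ with $\#C^0=m$, $0\le a_1<\dots<a_m\le d-1$, and there is a permutation $\sigma$ of $R_d$ with $\sigma(a_i)=b_i$ for all $i$; (b) $C^1$ consists of pairwise disjoint lines if and only if $C^1=\{L^1_{a_1,b_1},\dots,L^1_{a_m,b_m}\}$ with $\#C^1=m$, $0\le b_1<\dots<b_m\le d-1$, and $\varphi_{d,+}$ restricted to $\{(a_i,b_i)\}_{i=1}^m$ is injective; (c) $C^2$ consists of pairwise disjoint lines if and only if $C^2=\{L^2_{a_1,b_1},\dots,L^2_{a_m,b_m}\}$ with $\#C^2=m$, $0\le b_1<\dots<b_m\le d-1$, and $\varphi_{d,+}$ restricted to $\{(a_i,b_i)\}_{i=1}^m$ is injective.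
   Context: ${\rm F}_d\subset\mathbb{P}^3(\mathbb{C})$ is the surface $x^d-y^d-z^d+w^d=0$; $R_d=\{0,\dots,d-1\}$ and $r_d$ denotes remainder mod $d$. Fix a primitive $d$-th root of unity $\eta$ and $v\in\mathbb{C}$ with $v^d=-1$. For $k,i\in R_d$ define $L^0_{k,i}:\{y=\eta^i x,\ w=\eta^k z\}$, $L^1_{k,i}:\{x=\eta^{k+i}z,\ y=\eta^i w\}$, $L^2_{k,i}:\{x=v\eta^i w,\ y=v\eta^{k+i}z\}$, and $\mathcal{L}^s=\{L^s_{k,i}\}_{k,i\in R_d}$; these are all the lines on ${\rm F}_d$. Define $\varphi_{d,+}:R_d\times R_d\to R_d$ by $\varphi_{d,+}(k,i)=r_d(i+k)$. *)

theory Defs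
  imports Main "HOL.Complex"
begin

text \<open>Points of P^3(C) are represented by their nonzero homogeneous coordinate
vectors (x,y,z,w).  A line is represented by the set of all nonzero
coordinate vectors of its points (the punctured affine cone); two lines are
disjoint in P^3(C) iff these sets are disjoint.\<close>

type_synonym pt = "complex \<times> complex \<times> complex \<times> complex"

definition Fsurf :: "nat \<Rightarrow> pt set" where
  "Fsurf d = {(x,y,z,w). (x,y,z,w) \<noteq> (0,0,0,0) \<and> x^d - y^d - z^d + w^d = 0}"

text \<open>The lines L^s_{k,i} (eta a primitive d-th root of unity, v^d = -1).\<close>
definition line0 :: "complex \<Rightarrow> nat \<Rightarrow> nat \<Rightarrow> pt set" where
  "line0 \<eta> k i = {(x,y,z,w). (x,y,z,w) \<noteq> (0,0,0,0) \<and> y = \<eta>^i * x \<and> w = \<eta>^k * z}"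

definition line1 :: "complex \<Rightarrow> nat \<Rightarrow> nat \<Rightarrow> pt set" where
  "line1 \<eta> k i = {(x,y,z,w). (x,y,z,w) \<noteq> (0,0,0,0) \<and> x = \<eta>^(k+i) * z \<and> y = \<eta>^i * w}"

definition line2 :: "complex \<Rightarrow> complex \<Rightarrow> nat \<Rightarrow> nat \<Rightarrow> pt set" where
  "line2 \<eta> v k i = {(x,y,z,w). (x,y,z,w) \<noteq> (0,0,0,0) \<and> x = v * \<eta>^i * w \<and> y = v * \<eta>^(k+i) * z}"

definition fam0 :: "nat \<Rightarrow> complex \<Rightarrow> pt set set" where
  "fam0 d \<eta> = {line0 \<eta> k i | k i. k < d \<and> i < d}"

definition fam1 :: "nat \<Rightarrow> complex \<Rightarrow> pt set set" where
  "fam1 d \<eta> = {line1 \<eta> k i | k i. k < d \<and> i < d}"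

definition fam2 :: "nat \<Rightarrow> complex \<Rightarrow> complex \<Rightarrow> pt set set" where
  "fam2 d \<eta> v = {line2 \<eta> v k i | k i. k < d \<and> i < d}"

definition phi_plus :: "nat \<Rightarrow> nat \<times> nat \<Rightarrow> nat" where
  "phi_plus d p = (snd p + fst p) mod d"

end

theory Submission
  imports Defs "HOL-Library.Infinite_Set"
begin

(* Two lines of one family meet exactly when they share one of their points on two fixed
   coordinate planes, and there the lines are recorded by the roots of unity eta^k, eta^i
   (family 0) or eta^(k+i), eta^i (families 1, 2). As eta is primitive, L^0_{k,i} and
   L^0_{k',i'} are disjoint iff k ~= k' and i ~= i', while L^s_{k,i} and L^s_{k',i'}
   (s = 1, 2) are disjoint iff i ~= i' and phi_{d,+}(k,i) ~= phi_{d,+}(k',i'). So a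
   subfamily is pairwise disjoint iff both index maps are injective on its index set.
   Listing that set in increasing order of one key gives the enumeration; for family 0 the
   partial bijection a_j |-> b_j of the finite set R_d extends to a permutation. *)

lemma ex_sorted_pair_enumeration:
  fixes \<kappa> :: "'a \<times> 'b \<Rightarrow> 'c::wellorder"
  assumes "finite I" and "inj_on \<kappa> I"
  obtains a b where "bij_betw (\<lambda>j. (a j, b j)) {..<card I} I"
    and "\<forall>i j. i < j \<and> j < card I \<longrightarrow> \<kappa> (a i, b i) < \<kappa> (a j, b j)"
proof -
  have card_keys: "card (\<kappa> ` I) = card I"
    using assms(2) by (rule card_image)
  obtain h where h: "bij_betw h {..<card I} (\<kappa> ` I)" "strict_mono_on {..<card I} h"
    using ex_bij_betw_strict_mono_card[of "\<kappa> ` I"] assms(1) card_keys by auto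
  define e where "e = the_inv_into I \<kappa> \<circ> h"
  have "bij_betw e {..<card I} I"
    unfolding e_def using h(1) bij_betw_the_inv_into[OF inj_on_imp_bij_betw[OF assms(2)]]
    by (rule bij_betw_trans)
  moreover have "\<kappa> (e j) = h j" if "j < card I" for j
    using h(1) assms(2) that by (simp add: e_def bij_betwE f_the_inv_into_f)
  then have "\<forall>i j. i < j \<and> j < card I \<longrightarrow> \<kappa> (e i) < \<kappa> (e j)"
    using h(2) by (simp add: strict_mono_on_def)
  ultimately show thesis
    by (intro that[of "fst \<circ> e" "snd \<circ> e"]) simp_all
qed

lemma ex_permutation_extending_partial_bij:
  assumes "finite D" and "I \<subseteq> D \<times> D" and "inj_on fst I" and "inj_on snd I"
  obtains \<sigma> where "bij_betw \<sigma> D D" and "\<forall>p\<in>I. \<sigma> (fst p) = snd p"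
proof -
  let ?g = "snd \<circ> the_inv_into I fst"
  have g: "bij_betw ?g (fst ` I) (snd ` I)"
    using bij_betw_the_inv_into[OF inj_on_imp_bij_betw[OF assms(3)]]
      inj_on_imp_bij_betw[OF assms(4)]
    by (rule bij_betw_trans)
  have "finite I"
    using assms(1) by (intro finite_subset[OF assms(2)]) simp
  moreover have "fst ` I \<subseteq> D" "snd ` I \<subseteq> D"
    using assms(2) by auto
  ultimately have "card (D - fst ` I) = card (D - snd ` I)"
    using assms(3,4) by (simp add: card_Diff_subset card_image)
  then obtain h where h: "bij_betw h (D - fst ` I) (D - snd ` I)"
    using assms(1) finite_same_card_bij by blast
  define \<sigma> where "\<sigma> x = (if x \<in> fst ` I then ?g x else h x)" for x
  have "bij_betw \<sigma> (fst ` I) (snd ` I)"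
    using g by (rule bij_betw_cong[THEN iffD1, rotated]) (simp add: \<sigma>_def)
  moreover have "bij_betw \<sigma> (D - fst ` I) (D - snd ` I)"
    using h by (rule bij_betw_cong[THEN iffD1, rotated]) (simp add: \<sigma>_def)
  ultimately have "bij_betw \<sigma> (fst ` I \<union> (D - fst ` I)) (snd ` I \<union> (D - snd ` I))"
    by (rule bij_betw_combine) blast
  moreover have "fst ` I \<union> (D - fst ` I) = D" "snd ` I \<union> (D - snd ` I) = D"
    using assms(2) by auto
  moreover have "\<forall>p\<in>I. \<sigma> (fst p) = snd p"
    using assms(3) by (simp add: \<sigma>_def the_inv_into_f_f)
  ultimately show thesis using that by simp
qed

lemma pairwise_disjnt_image_iff:
  assumes "inj_on L I"
    and "\<And>p q. p \<in> I \<Longrightarrow> q \<in> I \<Longrightarrow> p \<noteq> q \<Longrightarrow> disjnt (L p) (L q) \<longleftrightarrow> f p \<noteq> f q \<and> g p \<noteq> g q"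
  shows "pairwise disjnt (L ` I) \<longleftrightarrow> inj_on f I \<and> inj_on g I"
proof -
  have "pairwise disjnt (L ` I) \<longleftrightarrow> (\<forall>p\<in>I. \<forall>q\<in>I. p \<noteq> q \<longrightarrow> disjnt (L p) (L q))"
    using assms(1) by (auto simp: pairwise_image pairwise_def inj_on_eq_iff)
  also have "\<dots> \<longleftrightarrow> (\<forall>p\<in>I. \<forall>q\<in>I. p \<noteq> q \<longrightarrow> f p \<noteq> f q \<and> g p \<noteq> g q)"
    using assms(2) by blast
  also have "\<dots> \<longleftrightarrow> inj_on f I \<and> inj_on g I"
    by (auto simp: inj_on_def)
  finally show ?thesis .
qed

lemma power_eq_power_iff_mod:
  fixes \<eta> :: "'a::idom"
  assumes "0 < d" and "\<eta> ^ d = 1" and "\<forall>j. 0 < j \<and> j < d \<longrightarrow> \<eta> ^ j \<noteq> 1"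
  shows "\<eta> ^ a = \<eta> ^ b \<longleftrightarrow> a mod d = b mod d"
proof -
  have reduce: "\<eta> ^ n = \<eta> ^ (n mod d)" for n
    by (metis assms(2) div_mult_mod_eq mult.commute power_add power_mult power_one mult_1)
  have "\<eta> \<noteq> 0"
    using assms(1,2) by (metis power_0_left less_not_refl zero_neq_one)
  have eq_if_less: "x = y" if "\<eta> ^ x = \<eta> ^ y" "x \<le> y" "y < d" for x y
  proof -
    have "\<eta> ^ x * \<eta> ^ (y - x) = \<eta> ^ y"
      using \<open>x \<le> y\<close> by (simp flip: power_add)
    then have "\<eta> ^ x * \<eta> ^ (y - x) = \<eta> ^ x * 1"
      using that(1) by simp
    then have "\<eta> ^ (y - x) = 1"
      using \<open>\<eta> \<noteq> 0\<close> by simp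
    moreover have "y - x < d"
      using that(3) by linarith
    ultimately show "x = y"
      using assms(3) that(2) by (metis diff_is_0_eq le_antisym neq0_conv)
  qed
  have "\<eta> ^ (a mod d) = \<eta> ^ (b mod d) \<longleftrightarrow> a mod d = b mod d"
    using eq_if_less[of "a mod d" "b mod d"] eq_if_less[of "b mod d" "a mod d"] assms(1)
    by (metis mod_less_divisor nle_le)
  then show ?thesis
    using reduce by metis
qed

lemma inj_on_phi_plus_snd: "inj_on (\<lambda>p. (phi_plus d p, snd p)) ({..<d} \<times> {..<d})"
proof (rule inj_onI, clarsimp)
  fix k k' i :: nat
  assume "k < d" "k' < d" "phi_plus d (k, i) = phi_plus d (k', i)"
  then have "(i + k) mod d = (i + k') mod d"
    by (simp add: phi_plus_def)
  then have "k mod d = k' mod d"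
    using nat_mod_eq_iff by force
  with \<open>k < d\<close> \<open>k' < d\<close> show "k = k'" by simp
qed

lemma disjnt_line0_iff:
  "disjnt (line0 \<eta> k i) (line0 \<eta> k' i') \<longleftrightarrow> \<eta> ^ k \<noteq> \<eta> ^ k' \<and> \<eta> ^ i \<noteq> \<eta> ^ i'"
proof
  assume disj: "disjnt (line0 \<eta> k i) (line0 \<eta> k' i')"
  show "\<eta> ^ k \<noteq> \<eta> ^ k' \<and> \<eta> ^ i \<noteq> \<eta> ^ i'"
  proof (intro conjI notI)
    assume "\<eta> ^ k = \<eta> ^ k'"
    then have "(0, 0, 1, \<eta> ^ k) \<in> line0 \<eta> k i \<inter> line0 \<eta> k' i'"
      by (simp add: line0_def)
    with disj show False
      by (simp add: disjnt_def)
  next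
    assume "\<eta> ^ i = \<eta> ^ i'"
    then have "(1, \<eta> ^ i, 0, 0) \<in> line0 \<eta> k i \<inter> line0 \<eta> k' i'"
      by (simp add: line0_def)
    with disj show False
      by (simp add: disjnt_def)
  qed
qed (auto simp: disjnt_def line0_def)

lemma disjnt_line1_iff:
  "disjnt (line1 \<eta> k i) (line1 \<eta> k' i') \<longleftrightarrow> \<eta> ^ (k + i) \<noteq> \<eta> ^ (k' + i') \<and> \<eta> ^ i \<noteq> \<eta> ^ i'"
proof
  assume disj: "disjnt (line1 \<eta> k i) (line1 \<eta> k' i')"
  show "\<eta> ^ (k + i) \<noteq> \<eta> ^ (k' + i') \<and> \<eta> ^ i \<noteq> \<eta> ^ i'"
  proof (intro conjI notI)
    assume "\<eta> ^ (k + i) = \<eta> ^ (k' + i')"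
    then have "(\<eta> ^ (k + i), 0, 1, 0) \<in> line1 \<eta> k i \<inter> line1 \<eta> k' i'"
      by (simp add: line1_def)
    with disj show False
      by (simp add: disjnt_def)
  next
    assume "\<eta> ^ i = \<eta> ^ i'"
    then have "(0, \<eta> ^ i, 0, 1) \<in> line1 \<eta> k i \<inter> line1 \<eta> k' i'"
      by (simp add: line1_def)
    with disj show False
      by (simp add: disjnt_def)
  qed
qed (auto simp: disjnt_def line1_def)

lemma disjnt_line2_iff:
  assumes "v \<noteq> 0"
  shows "disjnt (line2 \<eta> v k i) (line2 \<eta> v k' i') \<longleftrightarrow> \<eta> ^ (k + i) \<noteq> \<eta> ^ (k' + i') \<and> \<eta> ^ i \<noteq> \<eta> ^ i'"
proof
  assume disj: "disjnt (line2 \<eta> v k i) (line2 \<eta> v k' i')"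
  show "\<eta> ^ (k + i) \<noteq> \<eta> ^ (k' + i') \<and> \<eta> ^ i \<noteq> \<eta> ^ i'"
  proof (intro conjI notI)
    assume "\<eta> ^ (k + i) = \<eta> ^ (k' + i')"
    then have "(0, v * \<eta> ^ (k + i), 1, 0) \<in> line2 \<eta> v k i \<inter> line2 \<eta> v k' i'"
      by (simp add: line2_def)
    with disj show False
      by (simp add: disjnt_def)
  next
    assume "\<eta> ^ i = \<eta> ^ i'"
    then have "(v * \<eta> ^ i, 0, 0, 1) \<in> line2 \<eta> v k i \<inter> line2 \<eta> v k' i'"
      by (simp add: line2_def)
    with disj show False
      by (simp add: disjnt_def)
  qed
qed (use assms in \<open>auto simp: disjnt_def line2_def\<close>)

lemma line0_eqD:
  assumes "line0 \<eta> k i = line0 \<eta> k' i'"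
  shows "\<eta> ^ k = \<eta> ^ k' \<and> \<eta> ^ i = \<eta> ^ i'"
proof -
  have "(0, 0, 1, \<eta> ^ k) \<in> line0 \<eta> k' i'" "(1, \<eta> ^ i, 0, 0) \<in> line0 \<eta> k' i'"
    unfolding assms[symmetric] by (simp_all add: line0_def)
  then show ?thesis
    by (simp add: line0_def)
qed

lemma line1_eqD:
  assumes "line1 \<eta> k i = line1 \<eta> k' i'"
  shows "\<eta> ^ (k + i) = \<eta> ^ (k' + i') \<and> \<eta> ^ i = \<eta> ^ i'"
proof -
  have "(\<eta> ^ (k + i), 0, 1, 0) \<in> line1 \<eta> k' i'" "(0, \<eta> ^ i, 0, 1) \<in> line1 \<eta> k' i'"
    unfolding assms[symmetric] by (simp_all add: line1_def)
  then show ?thesis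
    by (simp add: line1_def)
qed

lemma line2_eqD:
  assumes "v \<noteq> 0" and "line2 \<eta> v k i = line2 \<eta> v k' i'"
  shows "\<eta> ^ (k + i) = \<eta> ^ (k' + i') \<and> \<eta> ^ i = \<eta> ^ i'"
proof -
  have "(0, v * \<eta> ^ (k + i), 1, 0) \<in> line2 \<eta> v k' i'" "(v * \<eta> ^ i, 0, 0, 1) \<in> line2 \<eta> v k' i'"
    unfolding assms(2)[symmetric] by (simp_all add: line2_def)
  then show ?thesis
    using assms(1) by (simp add: line2_def)
qed

locale primitive_root_of_unity =
  fixes d :: nat and \<eta> :: complex
  assumes order_pos: "0 < d"
    and power_order: "\<eta> ^ d = 1"
    and power_ne_one: "\<forall>j. 0 < j \<and> j < d \<longrightarrow> \<eta> ^ j \<noteq> 1"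
begin

lemma power_eq_power_iff_less: "a < d \<Longrightarrow> b < d \<Longrightarrow> \<eta> ^ a = \<eta> ^ b \<longleftrightarrow> a = b"
  using power_eq_power_iff_mod[OF order_pos power_order power_ne_one] by simp

lemma power_add_eq_power_add_iff:
  "\<eta> ^ (k + i) = \<eta> ^ (k' + i') \<longleftrightarrow> phi_plus d (k, i) = phi_plus d (k', i')"
  using power_eq_power_iff_mod[OF order_pos power_order power_ne_one]
  by (simp add: phi_plus_def add.commute)

lemma disjnt_line0_iff_less:
  "k < d \<Longrightarrow> i < d \<Longrightarrow> k' < d \<Longrightarrow> i' < d \<Longrightarrow>
    disjnt (line0 \<eta> k i) (line0 \<eta> k' i') \<longleftrightarrow> k \<noteq> k' \<and> i \<noteq> i'"
  by (simp add: disjnt_line0_iff power_eq_power_iff_less)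

lemma disjnt_line1_iff_less:
  "i < d \<Longrightarrow> i' < d \<Longrightarrow>
    disjnt (line1 \<eta> k i) (line1 \<eta> k' i') \<longleftrightarrow> phi_plus d (k, i) \<noteq> phi_plus d (k', i') \<and> i \<noteq> i'"
  by (simp add: disjnt_line1_iff power_add_eq_power_add_iff power_eq_power_iff_less)

lemma disjnt_line2_iff_less:
  "v \<noteq> 0 \<Longrightarrow> i < d \<Longrightarrow> i' < d \<Longrightarrow>
    disjnt (line2 \<eta> v k i) (line2 \<eta> v k' i') \<longleftrightarrow> phi_plus d (k, i) \<noteq> phi_plus d (k', i') \<and> i \<noteq> i'"
  by (simp add: disjnt_line2_iff power_add_eq_power_add_iff power_eq_power_iff_less)

lemma inj_on_line0: "inj_on (case_prod (line0 \<eta>)) ({..<d} \<times> {..<d})"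
  by (rule inj_onI) (auto dest!: line0_eqD simp: power_eq_power_iff_less)

lemma inj_on_line1: "inj_on (case_prod (line1 \<eta>)) ({..<d} \<times> {..<d})"
proof (rule inj_onI)
  fix p q
  assume "p \<in> {..<d} \<times> {..<d}" "q \<in> {..<d} \<times> {..<d}"
    and "case_prod (line1 \<eta>) p = case_prod (line1 \<eta>) q"
  then have "(phi_plus d p, snd p) = (phi_plus d q, snd q)"
    by (auto dest!: line1_eqD simp: power_add_eq_power_add_iff power_eq_power_iff_less)
  then show "p = q"
    using \<open>p \<in> _\<close> \<open>q \<in> _\<close> by (rule inj_onD[OF inj_on_phi_plus_snd])
qed

lemma inj_on_line2:
  assumes "v \<noteq> 0"
  shows "inj_on (case_prod (line2 \<eta> v)) ({..<d} \<times> {..<d})"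
proof (rule inj_onI)
  fix p q
  assume "p \<in> {..<d} \<times> {..<d}" "q \<in> {..<d} \<times> {..<d}"
    and "case_prod (line2 \<eta> v) p = case_prod (line2 \<eta> v) q"
  then have "(phi_plus d p, snd p) = (phi_plus d q, snd q)"
    by (auto dest!: line2_eqD[OF assms] simp: power_add_eq_power_add_iff power_eq_power_iff_less)
  then show "p = q"
    using \<open>p \<in> _\<close> \<open>q \<in> _\<close> by (rule inj_onD[OF inj_on_phi_plus_snd])
qed

end

lemma pairwise_disjnt_iff_permutation_enumeration:
  fixes L :: "nat \<Rightarrow> nat \<Rightarrow> 'a set"
  assumes "0 < d"
    and inj: "inj_on (case_prod L) ({..<d} \<times> {..<d})"
    and disjnt_iff: "\<And>k i k' i'. k < d \<Longrightarrow> i < d \<Longrightarrow> k' < d \<Longrightarrow> i' < d \<Longrightarrow>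
      disjnt (L k i) (L k' i') \<longleftrightarrow> k \<noteq> k' \<and> i \<noteq> i'"
    and S: "S \<subseteq> {L k i | k i. k < d \<and> i < d}"
  shows "pairwise disjnt S \<longleftrightarrow>
    (\<exists>m a b. S = (\<lambda>j. L (a j) (b j)) ` {..<m}
      \<and> card S = m
      \<and> (\<forall>i j. i < j \<and> j < m \<longrightarrow> a i < a j)
      \<and> (\<forall>j<m. a j \<le> d - 1)
      \<and> (\<exists>\<sigma>. bij_betw \<sigma> {..<d} {..<d} \<and> (\<forall>j<m. \<sigma> (a j) = b j)))"
    (is "_ \<longleftrightarrow> ?enumerated")
proof -
  define R where "R = {..<d} \<times> {..<d}"
  have disjnt_R: "disjnt (case_prod L p) (case_prod L q) \<longleftrightarrow> fst p \<noteq> fst q \<and> snd p \<noteq> snd q"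
    if "p \<in> R" "q \<in> R" for p q
    using disjnt_iff that by (auto simp: R_def split_beta)
  have pairwise_iff: "pairwise disjnt (case_prod L ` I) \<longleftrightarrow> inj_on fst I \<and> inj_on snd I"
    if "I \<subseteq> R" for I
    by (intro pairwise_disjnt_image_iff inj_on_subset[OF inj[folded R_def]] disjnt_R)
      (use that in auto)
  have "S \<subseteq> case_prod L ` R"
    using S by (auto simp: R_def)
  then obtain I where I: "I \<subseteq> R" "S = case_prod L ` I"
    unfolding subset_image_iff by blast
  show ?thesis
  proof
    assume "pairwise disjnt S"
    then have inj_fst: "inj_on fst I" and inj_snd: "inj_on snd I"
      using pairwise_iff I by auto
    have "finite I"
      using I(1) finite_subset by (auto simp: R_def)
    obtain a b where ab: "bij_betw (\<lambda>j. (a j, b j)) {..<card I} I"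
      and a_mono: "\<forall>i j. i < j \<and> j < card I \<longrightarrow> a i < a j"
      using ex_sorted_pair_enumeration[OF \<open>finite I\<close> inj_fst] by auto
    obtain \<sigma> where \<sigma>: "bij_betw \<sigma> {..<d} {..<d}" "\<forall>p\<in>I. \<sigma> (fst p) = snd p"
      using ex_permutation_extending_partial_bij[OF _ _ inj_fst inj_snd] I(1) by (auto simp: R_def)
    have ab_in: "(a j, b j) \<in> I" if "j < card I" for j
      using bij_betwE[OF ab] that by simp
    have "S = case_prod L ` (\<lambda>j. (a j, b j)) ` {..<card I}"
      using I(2) bij_betw_imp_surj_on[OF ab] by simp
    then have "S = (\<lambda>j. L (a j) (b j)) ` {..<card I}"
      by (simp add: image_image)
    moreover have "card S = card I"
      using I inj by (simp add: R_def card_image inj_on_subset)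
    moreover have "\<forall>j<card I. a j \<le> d - 1"
      using ab_in I(1) by (fastforce simp: R_def)
    moreover have "\<forall>j<card I. \<sigma> (a j) = b j"
      using ab_in \<sigma>(2) by fastforce
    ultimately show ?enumerated
      using a_mono \<sigma>(1) by blast
  next
    assume ?enumerated
    then obtain m :: nat and a b \<sigma> :: "nat \<Rightarrow> nat" where S_eq: "S = (\<lambda>j. L (a j) (b j)) ` {..<m}"
      and a_mono: "\<forall>i j. i < j \<and> j < m \<longrightarrow> a i < a j" and a_le: "\<forall>j<m. a j \<le> d - 1"
      and \<sigma>: "bij_betw \<sigma> {..<d} {..<d}" "\<forall>j<m. \<sigma> (a j) = b j"
      by blast
    define J where "J = (\<lambda>j. (a j, b j)) ` {..<m}"
    have a_less: "a ` {..<m} \<subseteq> {..<d}"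
      using a_le \<open>0 < d\<close> by fastforce
    have "b ` {..<m} = \<sigma> ` a ` {..<m}"
      using \<sigma>(2) by (simp add: image_image)
    also have "\<dots> \<subseteq> {..<d}"
      using a_less \<sigma>(1) by (metis bij_betw_imp_surj_on image_mono)
    finally have "J \<subseteq> R"
      using a_less by (auto simp: J_def R_def)
    have inj_a: "inj_on a {..<m}"
      using a_mono by (intro strict_mono_on_imp_inj_on) (simp add: strict_mono_on_def)
    have "inj_on (\<sigma> \<circ> a) {..<m}"
      using inj_a inj_on_subset[OF bij_betw_imp_inj_on[OF \<sigma>(1)] a_less] by (rule comp_inj_on)
    then have "inj_on b {..<m}"
      by (rule inj_on_cong[THEN iffD1, rotated]) (simp add: \<sigma>(2))
    with inj_a have "inj_on fst J" "inj_on snd J"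
      unfolding J_def by (auto intro!: inj_on_imageI simp: comp_def)
    moreover have "S = case_prod L ` J"
      by (simp add: S_eq J_def image_image)
    ultimately show "pairwise disjnt S"
      using pairwise_iff \<open>J \<subseteq> R\<close> by blast
  qed
qed

lemma pairwise_disjnt_iff_phi_plus_enumeration:
  fixes L :: "nat \<Rightarrow> nat \<Rightarrow> 'a set"
  assumes "0 < d"
    and inj: "inj_on (case_prod L) ({..<d} \<times> {..<d})"
    and disjnt_iff: "\<And>k i k' i'. k < d \<Longrightarrow> i < d \<Longrightarrow> k' < d \<Longrightarrow> i' < d \<Longrightarrow>
      disjnt (L k i) (L k' i') \<longleftrightarrow> phi_plus d (k, i) \<noteq> phi_plus d (k', i') \<and> i \<noteq> i'"
    and S: "S \<subseteq> {L k i | k i. k < d \<and> i < d}"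
  shows "pairwise disjnt S \<longleftrightarrow>
    (\<exists>m a b. S = (\<lambda>j. L (a j) (b j)) ` {..<m}
      \<and> card S = m
      \<and> (\<forall>i j. i < j \<and> j < m \<longrightarrow> b i < b j)
      \<and> (\<forall>j<m. a j \<le> d - 1 \<and> b j \<le> d - 1)
      \<and> inj_on (phi_plus d) ((\<lambda>j. (a j, b j)) ` {..<m}))"
    (is "_ \<longleftrightarrow> ?enumerated")
proof -
  define R where "R = {..<d} \<times> {..<d}"
  have disjnt_R: "disjnt (case_prod L p) (case_prod L q) \<longleftrightarrow> phi_plus d p \<noteq> phi_plus d q \<and> snd p \<noteq> snd q"
    if "p \<in> R" "q \<in> R" for p q
    using disjnt_iff that by (auto simp: R_def split_beta)
  have pairwise_iff: "pairwise disjnt (case_prod L ` I) \<longleftrightarrow> inj_on (phi_plus d) I \<and> inj_on snd I"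
    if "I \<subseteq> R" for I
    by (intro pairwise_disjnt_image_iff inj_on_subset[OF inj[folded R_def]] disjnt_R)
      (use that in auto)
  have "S \<subseteq> case_prod L ` R"
    using S by (auto simp: R_def)
  then obtain I where I: "I \<subseteq> R" "S = case_prod L ` I"
    unfolding subset_image_iff by blast
  show ?thesis
  proof
    assume "pairwise disjnt S"
    then have inj_phi: "inj_on (phi_plus d) I" and inj_snd: "inj_on snd I"
      using pairwise_iff I by auto
    have "finite I"
      using I(1) finite_subset by (auto simp: R_def)
    obtain a b where ab: "bij_betw (\<lambda>j. (a j, b j)) {..<card I} I"
      and b_mono: "\<forall>i j. i < j \<and> j < card I \<longrightarrow> b i < b j"
      using ex_sorted_pair_enumeration[OF \<open>finite I\<close> inj_snd] by auto
    have I_eq: "(\<lambda>j. (a j, b j)) ` {..<card I} = I"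
      using ab by (rule bij_betw_imp_surj_on)
    have "S = case_prod L ` (\<lambda>j. (a j, b j)) ` {..<card I}"
      using I(2) I_eq by simp
    then have "S = (\<lambda>j. L (a j) (b j)) ` {..<card I}"
      by (simp add: image_image)
    moreover have "card S = card I"
      using I inj by (simp add: R_def card_image inj_on_subset)
    moreover have "\<forall>j<card I. a j \<le> d - 1 \<and> b j \<le> d - 1"
      using bij_betwE[OF ab] I(1) by (fastforce simp: R_def)
    moreover have "inj_on (phi_plus d) ((\<lambda>j. (a j, b j)) ` {..<card I})"
      using inj_phi I_eq by simp
    ultimately show ?enumerated
      using b_mono by blast
  next
    assume ?enumerated
    then obtain m :: nat and a b :: "nat \<Rightarrow> nat" where S_eq: "S = (\<lambda>j. L (a j) (b j)) ` {..<m}"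
      and b_mono: "\<forall>i j. i < j \<and> j < m \<longrightarrow> b i < b j" and ab_le: "\<forall>j<m. a j \<le> d - 1 \<and> b j \<le> d - 1"
      and inj_phi: "inj_on (phi_plus d) ((\<lambda>j. (a j, b j)) ` {..<m})"
      by blast
    define J where "J = (\<lambda>j. (a j, b j)) ` {..<m}"
    have "J \<subseteq> R"
      using ab_le \<open>0 < d\<close> by (fastforce simp: J_def R_def)
    have "inj_on b {..<m}"
      using b_mono by (intro strict_mono_on_imp_inj_on) (simp add: strict_mono_on_def)
    then have "inj_on snd J"
      unfolding J_def by (intro inj_on_imageI) (simp add: comp_def)
    moreover have "S = case_prod L ` J"
      by (simp add: S_eq J_def image_image)
    ultimately show "pairwise disjnt S"
      using pairwise_iff \<open>J \<subseteq> R\<close> inj_phi by (simp add: J_def)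
  qed
qed

theorem corollary2p4:
  fixes d :: nat and \<eta> v :: complex and C :: "pt set set"
  assumes "d \<ge> 3"
    and "\<eta> ^ d = 1" and "\<forall>j. 0 < j \<and> j < d \<longrightarrow> \<eta> ^ j \<noteq> 1"
    and "v ^ d = -1"
    and "C \<subseteq> fam0 d \<eta> \<union> fam1 d \<eta> \<union> fam2 d \<eta> v"
  shows
   "(pairwise disjnt (C \<inter> fam0 d \<eta>) \<longleftrightarrow>
      (\<exists>m a b. C \<inter> fam0 d \<eta> = (\<lambda>j. line0 \<eta> (a j) (b j)) ` {..<m}
        \<and> card (C \<inter> fam0 d \<eta>) = m
        \<and> (\<forall>i j. i < j \<and> j < m \<longrightarrow> a i < a j)
        \<and> (\<forall>j<m. a j \<le> d - 1)
        \<and> (\<exists>\<sigma>. bij_betw \<sigma> {..<d} {..<d} \<and> (\<forall>j<m. \<sigma> (a j) = b j))))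
    \<and> (pairwise disjnt (C \<inter> fam1 d \<eta>) \<longleftrightarrow>
      (\<exists>m a b. C \<inter> fam1 d \<eta> = (\<lambda>j. line1 \<eta> (a j) (b j)) ` {..<m}
        \<and> card (C \<inter> fam1 d \<eta>) = m
        \<and> (\<forall>i j. i < j \<and> j < m \<longrightarrow> b i < b j)
        \<and> (\<forall>j<m. a j \<le> d - 1 \<and> b j \<le> d - 1)
        \<and> inj_on (phi_plus d) ((\<lambda>j. (a j, b j)) ` {..<m})))
    \<and> (pairwise disjnt (C \<inter> fam2 d \<eta> v) \<longleftrightarrow>
      (\<exists>m a b. C \<inter> fam2 d \<eta> v = (\<lambda>j. line2 \<eta> v (a j) (b j)) ` {..<m}
        \<and> card (C \<inter> fam2 d \<eta> v) = m
        \<and> (\<forall>i j. i < j \<and> j < m \<longrightarrow> b i < b j)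
        \<and> (\<forall>j<m. a j \<le> d - 1 \<and> b j \<le> d - 1)
        \<and> inj_on (phi_plus d) ((\<lambda>j. (a j, b j)) ` {..<m})))"
proof -
  interpret primitive_root_of_unity d \<eta>
    using assms(1-3) by unfold_locales simp_all
  have "v \<noteq> 0"
    using assms(4) order_pos by (auto simp: power_0_left)
  have "C \<inter> fam0 d \<eta> \<subseteq> {line0 \<eta> k i | k i. k < d \<and> i < d}"
    and "C \<inter> fam1 d \<eta> \<subseteq> {line1 \<eta> k i | k i. k < d \<and> i < d}"
    and "C \<inter> fam2 d \<eta> v \<subseteq> {line2 \<eta> v k i | k i. k < d \<and> i < d}"
    unfolding fam0_def fam1_def fam2_def by blast+
  with \<open>v \<noteq> 0\<close> show ?thesis
    by (intro conjI pairwise_disjnt_iff_permutation_enumeration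
        pairwise_disjnt_iff_phi_plus_enumeration)
      (simp_all add: order_pos inj_on_line0 inj_on_line1 inj_on_line2
        disjnt_line0_iff_less disjnt_line1_iff_less disjnt_line2_iff_less)
qed

end
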